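(* Let $e_1,\dots,e_p$ be unit vectors in $\mathbb{C}^m$ and $f_1,\dots,f_p$ unit vectors in $\mathbb{C}^n$ such that $[e_i]\neq[e_j]$ for $i\neq j$ and $f_1,\dots,f_p$ are linearly independent. If $\lambda_1,\dots,\lambda_p$ are nonnegative numbers with sum $1$, then the separable state $\omega=\sum_i\lambda_i\omega_{e_i\otimes f_i}$ has a unique representation as a convex combination of pure product states.
   Context: States are on $\mathcal{B}(\mathbb{C}^m\otimes\mathbb{C}^n)$; $\omega_z(A)=(Az,z)$ for a unit vector $z$; a pure product state is a state $\omega_{x\otimes y}$ with $x\in\mathbb{C}^m$, $y\in\mathbb{C}^n$ unit vectors. $[x]$ is the line spanned by $x$. Uniqueness means: any two expressions of $\omega$ as convex combinations of pure product states (with positive weights, combining equal terms) coincide. *)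

theory Defs
  imports "HOL-Analysis.Analysis"
begin

text \<open>C^m is modelled as complex^'m, C^n as complex^'n, and the tensor product
C^m (x) C^n as complex^('m \<times> 'n). Operators in B(C^m (x) C^n) are matrices.\<close>

type_synonym ('m,'n) op = "complex^('m \<times> 'n)^('m \<times> 'n)"
type_synonym ('m,'n) functional = "('m,'n) op \<Rightarrow> complex"

definition tensor :: "complex^'m \<Rightarrow> complex^'n \<Rightarrow> complex^('m \<times> 'n)" where
  "tensor x y = (\<chi> k. x $ fst k * y $ snd k)"

definition vstate :: "complex^'k \<Rightarrow> complex^'k^'k \<Rightarrow> complex" where
  "vstate z A = (\<Sum>k\<in>UNIV. (A *v z) $ k * cnj (z $ k))"

definition pure_product_state :: "('m::finite,'n::finite) functional \<Rightarrow> bool" where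
  "pure_product_state s \<longleftrightarrow>
     (\<exists>(x::complex^'m) (y::complex^'n). norm x = 1 \<and> norm y = 1 \<and> s = vstate (tensor x y))"

definition line :: "complex^'k \<Rightarrow> (complex^'k) set" where
  "line x = {c *s x | c. True}"

definition lin_indep_family :: "nat \<Rightarrow> (nat \<Rightarrow> complex^'k) \<Rightarrow> bool" where
  "lin_indep_family p f \<longleftrightarrow>
     (\<forall>c::nat \<Rightarrow> complex. (\<Sum>i<p. c i *s f i) = 0 \<longrightarrow> (\<forall>i<p. c i = 0))"

text \<open>A convex combination of pure product states, with positive weights and
equal terms combined: a finitely supported weight function mu on states.\<close>
definition pps_representation ::
    "('m::finite,'n::finite) functional \<Rightarrow> (('m,'n) functional \<Rightarrow> real) \<Rightarrow> bool" where
  "pps_representation \<omega> \<mu> \<longleftrightarrow>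
     finite {s. \<mu> s \<noteq> 0} \<and>
     (\<forall>s. \<mu> s \<ge> 0) \<and>
     (\<forall>s. \<mu> s \<noteq> 0 \<longrightarrow> pure_product_state s) \<and>
     (\<Sum>s\<in>{s. \<mu> s \<noteq> 0}. \<mu> s) = 1 \<and>
     (\<forall>A. \<omega> A = (\<Sum>s\<in>{s. \<mu> s \<noteq> 0}. complex_of_real (\<mu> s) * s A))"

end

theory Submission
  imports Defs
begin

(* Write u_i = e_i \<otimes> f_i.  The u_i are linearly independent, hence so are the vector states
   omega_{u_i} (test them on matrix units).  Let omega = \<Sum>s mu_s s be any decomposition into
   pure product states s = omega_{x \<otimes> y}.  If v is orthogonal to every u_i, then omega vanishes
   on |v><v|; as every pure state is nonnegative there, so does each s in the support, i.e.
   x \<otimes> y is orthogonal to v.  Hence x \<otimes> y lies in the span of the u_i, and a product vector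
   in that span is a multiple of a single u_k (distinct lines, independent f_i).  So every state
   in the support is some omega_{u_k}, and independence of these states forces
   mu(omega_{u_k}) = lam_k. *)

definition cinner :: "complex^'k \<Rightarrow> complex^'k \<Rightarrow> complex" where
  "cinner x y = (\<Sum>k\<in>UNIV. x $ k * cnj (y $ k))"

definition rank_one :: "complex^'k \<Rightarrow> complex^'k^'k" where
  "rank_one v = (\<chi> a b. v $ a * cnj (v $ b))"

definition matrix_unit :: "'k \<Rightarrow> 'k \<Rightarrow> complex^'k^'k" where
  "matrix_unit i j = (\<chi> a b. if a = i \<and> b = j then 1 else 0)"

lemma cinner_commute: "cinner x y = cnj (cinner y x)"
  unfolding cinner_def by (simp add: mult.commute)

lemma cinner_smult_left: "cinner (c *s x) y = c * cinner x y"
  unfolding cinner_def by (simp add: sum_distrib_left mult_ac)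

lemma cinner_smult_right: "cinner x (c *s y) = cnj c * cinner x y"
  unfolding cinner_def by (simp add: sum_distrib_left mult_ac)

text \<open>The real inner product on complex vectors is the real part of the complex one; this
  lets us use the real orthogonal decomposition of the library.\<close>

lemma inner_eq_Re_cinner: "inner x y = Re (cinner x y)"
  unfolding inner_vec_def cinner_def by (simp add: Re_sum inner_complex_def)

lemma norm_smult_complex: "norm (c *s (x::complex^'k::finite)) = cmod c * norm x"
proof -
  have "inner (c *s x) (c *s x) = Re ((c * cnj c) * cinner x x)"
    by (simp add: inner_eq_Re_cinner cinner_smult_left cinner_smult_right mult_ac)
  also have "\<dots> = Re (of_real ((cmod c)^2) * cinner x x)" by (simp only: complex_norm_square)
  also have "\<dots> = (cmod c)^2 * inner x x" by (simp add: inner_eq_Re_cinner)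
  finally have "(norm (c *s x))^2 = (cmod c * norm x)^2"
    by (simp only: power2_norm_eq_inner power_mult_distrib)
  then show ?thesis by (simp add: power2_eq_imp_eq)
qed

lemma vstate_matrix_unit: "vstate z (matrix_unit i j) = z $ j * cnj (z $ i)"
proof -
  have "matrix_unit i j *v z = (\<chi> a. if a = i then z $ j else 0)"
    by (simp add: matrix_unit_def matrix_vector_mult_def vec_eq_iff if_distrib if_distribR cong: if_cong)
  then show ?thesis unfolding vstate_def by (simp add: if_distrib if_distribR cong: if_cong)
qed

lemma vstate_rank_one: "vstate z (rank_one v) = of_real ((cmod (cinner z v))^2)"
proof -
  have "vstate z (rank_one v) = (\<Sum>a\<in>UNIV. v $ a * cnj (z $ a) * cinner z v)"
    unfolding vstate_def matrix_vector_mult_def cinner_def rank_one_def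
    by (auto simp: sum_distrib_left mult_ac intro!: sum.cong)
  also have "\<dots> = cnj (cinner z v) * cinner z v"
    unfolding cinner_def by (simp add: sum_distrib_right mult_ac)
  finally show ?thesis by (metis complex_norm_square mult.commute)
qed

lemma vstate_smult: "vstate (c *s z) A = of_real ((cmod c)^2) * vstate z A"
proof -
  have "vstate (c *s z) A = (c * cnj c) * vstate z A"
    unfolding vstate_def matrix_vector_mult_def
    by (simp add: sum_distrib_left sum_distrib_right mult_ac)
  then show ?thesis by (simp only: complex_norm_square)
qed

lemma norm_tensor: "norm (tensor x y) = norm x * norm y"
proof -
  have "(norm (tensor x y))^2 = (norm x * norm y)^2"
    unfolding power2_norm_eq_inner inner_vec_def tensor_def power_mult_distrib
    by (simp add: sum.cartesian_product sum_product case_prod_beta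
         inner_complex_def algebra_simps flip: UNIV_Times_UNIV)
  then show ?thesis by (simp add: power2_eq_imp_eq)
qed

lemma line_smult: "t \<noteq> 0 \<Longrightarrow> line (t *s x) = line x"
  unfolding line_def
proof (intro set_eqI iffI)
  fix z assume "z \<in> {c *s (t *s x) |c. True}"
  then show "z \<in> {c *s x |c. True}" by (auto simp: vector_smult_assoc)
next
  fix z assume t: "t \<noteq> 0" and "z \<in> {c *s x |c. True}"
  then obtain c where "z = c *s x" by auto
  then have "z = (c / t) *s (t *s x)" using t by (simp add: vector_smult_assoc)
  then show "z \<in> {c *s (t *s x) |c. True}" by blast
qed

lemma lin_indep_family_componentwise:
  assumes indep: "lin_indep_family p f"
    and zero: "\<And>b. (\<Sum>i<p. c i * f i $ b) = 0" and k: "k < p"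
  shows "c k = 0"
proof -
  have "(\<Sum>i<p. c i *s f i) = 0" using zero by (simp add: vec_eq_iff)
  then show ?thesis using indep k unfolding lin_indep_family_def by blast
qed

lemma lin_indep_tensor:
  assumes indep: "lin_indep_family p f" and nonzero: "\<forall>i<p. e i \<noteq> 0"
  shows "lin_indep_family p (\<lambda>i. tensor (e i) (f i))"
  unfolding lin_indep_family_def
proof (intro allI impI)
  fix c :: "nat \<Rightarrow> complex" and k
  assume sum0: "(\<Sum>i<p. c i *s tensor (e i) (f i)) = 0" and k: "k < p"
  have "c k * e k $ a = 0" for a
  proof (rule lin_indep_family_componentwise[where c="\<lambda>i. c i * e i $ a", OF indep _ k])
    fix b
    have "(\<Sum>i<p. c i *s tensor (e i) (f i)) $ (a, b) = 0" using sum0 by simp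
    then show "(\<Sum>i<p. (c i * e i $ a) * f i $ b) = 0" by (simp add: tensor_def mult_ac)
  qed
  moreover obtain a where "e k $ a \<noteq> 0" using nonzero k by (metis vec_eq_iff zero_index)
  ultimately show "c k = 0" by (metis mult_eq_0_iff)
qed

text \<open>The vector states of an independent family of nonzero vectors are linearly
  independent functionals: evaluate on the matrix units and use independence twice.\<close>

lemma vstates_lin_indep:
  assumes indep: "lin_indep_family p u" and nonzero: "\<forall>i<p. u i \<noteq> 0"
    and zero: "\<forall>A. (\<Sum>i<p. d i * vstate (u i) A) = 0" and k: "k < p"
  shows "d k = 0"
proof -
  have "d k * cnj (u k $ a) = 0" for a
  proof (rule lin_indep_family_componentwise[where c="\<lambda>i. d i * cnj (u i $ a)", OF indep _ k])
    fix b
    show "(\<Sum>i<p. (d i * cnj (u i $ a)) * u i $ b) = 0"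
      using zero[rule_format, of "matrix_unit a b"] by (simp add: vstate_matrix_unit mult_ac)
  qed
  moreover obtain a where "u k $ a \<noteq> 0" using nonzero k by (metis vec_eq_iff zero_index)
  ultimately show ?thesis by (metis complex_cnj_zero_iff mult_eq_0_iff)
qed

text \<open>If a product vector x \<otimes> y is expanded along e_i \<otimes> f_i with independent f_i, then
  every term c_i e_i is a multiple of x: compare the rows a and a0 of the coefficient matrix.\<close>

lemma tensor_expansion_collinear:
  assumes indep: "lin_indep_family p f"
    and expansion: "tensor x y = (\<Sum>i<p. c i *s tensor (e i) (f i))"
    and a0: "x $ a0 \<noteq> 0" and k: "k < p"
  shows "c k *s e k = (c k * e k $ a0 / x $ a0) *s x"
proof -
  have entry: "x $ a * y $ b = (\<Sum>i<p. c i * e i $ a * f i $ b)" for a b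
    using arg_cong[OF expansion, of "\<lambda>w. w $ (a, b)"] by (simp add: tensor_def mult_ac)
  have "c k * e k $ a - x $ a * (c k * e k $ a0 / x $ a0) = 0" for a
  proof (rule lin_indep_family_componentwise
      [where c="\<lambda>i. c i * e i $ a - x $ a * (c i * e i $ a0 / x $ a0)", OF indep _ k])
    fix b
    have "(\<Sum>i<p. (c i * e i $ a - x $ a * (c i * e i $ a0 / x $ a0)) * f i $ b)
        = x $ a * y $ b - x $ a / x $ a0 * (x $ a0 * y $ b)"
      unfolding entry
      by (simp add: sum_subtractf sum_distrib_left sum_divide_distrib algebra_simps)
    also have "\<dots> = 0" using a0 by simp
    finally show "(\<Sum>i<p. (c i * e i $ a - x $ a * (c i * e i $ a0 / x $ a0)) * f i $ b) = 0" .
  qed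
  then show ?thesis by (simp add: vec_eq_iff algebra_simps)
qed

text \<open>A nonzero product vector in the span of the e_i \<otimes> f_i is a multiple of a single
  e_k \<otimes> f_k: every e_i with nonzero coefficient spans the line [x], and the lines are
  distinct.\<close>

lemma product_vector_in_span:
  assumes indep: "lin_indep_family p f" and nonzero: "\<forall>i<p. e i \<noteq> 0"
    and lines: "\<forall>i<p. \<forall>j<p. i \<noteq> j \<longrightarrow> line (e i) \<noteq> line (e j)"
    and expansion: "tensor x y = (\<Sum>i<p. c i *s tensor (e i) (f i))"
    and product_nonzero: "tensor x y \<noteq> 0"
  shows "\<exists>k<p. tensor x y = c k *s tensor (e k) (f k)"
proof -
  have "x \<noteq> 0" using product_nonzero by (auto simp: tensor_def vec_eq_iff)
  then obtain a0 where a0: "x $ a0 \<noteq> 0" by (metis vec_eq_iff zero_index)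
  have same_line: "line (e k) = line x" if k: "k < p" and ck: "c k \<noteq> 0" for k
  proof -
    define t where "t = e k $ a0 / x $ a0"
    have "c k *s e k = c k *s (t *s x)"
      using tensor_expansion_collinear[OF indep expansion a0 k] by (simp add: t_def vector_smult_assoc)
    then have ek: "e k = t *s x" using ck by (simp add: vec_eq_iff)
    then have "t \<noteq> 0" using nonzero k by auto
    then show ?thesis using ek line_smult by simp
  qed
  have "\<exists>k<p. c k \<noteq> 0"
  proof (rule ccontr)
    assume "\<not> (\<exists>k<p. c k \<noteq> 0)"
    then have "tensor x y = 0" unfolding expansion by simp
    with product_nonzero show False ..
  qed
  then obtain k where k: "k < p" and ck: "c k \<noteq> 0" by blast
  have others: "c j = 0" if "j < p" "j \<noteq> k" for j
    using same_line k ck lines that by metis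
  have "(\<Sum>i<p. c i *s tensor (e i) (f i)) = c k *s tensor (e k) (f k)"
    using k others by (subst sum.remove[of _ k]) (auto intro!: sum.neutral)
  then show ?thesis using expansion k by auto
qed

definition complex_span :: "nat \<Rightarrow> (nat \<Rightarrow> complex^'k) \<Rightarrow> (complex^'k) set" where
  "complex_span p u = {\<Sum>i<p. c i *s u i | c. True}"

text \<open>It is in particular a real subspace, so the real span theory applies to it.\<close>

lemma subspace_complex_span: "subspace (complex_span p u)"
  unfolding subspace_def complex_span_def
proof (intro conjI ballI allI)
  show "0 \<in> {\<Sum>i<p. c i *s u i | c. True}"
    by (auto intro!: exI[where x="\<lambda>_. 0"])
next
  fix a b assume "a \<in> {\<Sum>i<p. c i *s u i | c. True}" "b \<in> {\<Sum>i<p. c i *s u i | c. True}"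
  then obtain ca cb where "a = (\<Sum>i<p. ca i *s u i)" "b = (\<Sum>i<p. cb i *s u i)" by auto
  then have "a + b = (\<Sum>i<p. (ca i + cb i) *s u i)"
    by (simp add: sum.distrib vector_sadd_rdistrib)
  then show "a + b \<in> {\<Sum>i<p. c i *s u i | c. True}"
    by (auto intro!: exI[where x="\<lambda>i. ca i + cb i"])
next
  fix r :: real and a assume "a \<in> {\<Sum>i<p. c i *s u i | c. True}"
  then obtain ca where "a = (\<Sum>i<p. ca i *s u i)" by auto
  then have "r *\<^sub>R a = (\<Sum>i<p. (of_real r * ca i) *s u i)"
    unfolding vec_eq_iff vector_scaleR_component
    by (simp add: scaleR_conv_of_real sum_distrib_left mult_ac)
  then show "r *\<^sub>R a \<in> {\<Sum>i<p. c i *s u i | c. True}"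
    by (auto intro!: exI[where x="\<lambda>i. of_real r * ca i"])
qed

lemma smult_mem_complex_span: "j < p \<Longrightarrow> t *s u j \<in> complex_span p u"
proof -
  assume j: "j < p"
  then have "(\<Sum>i<p. (if i = j then t else 0) *s u i) = t *s u j"
    by (subst sum.remove[of _ j]) (auto intro!: sum.neutral)
  then show ?thesis
    unfolding complex_span_def by (auto intro!: exI[where x="\<lambda>i. if i = j then t else 0"])
qed

text \<open>Viewing complex vectors as a real Euclidean space, the complex span is the real span of
  the u_i and the i u_i, and we use the real orthogonal decomposition.\<close>

lemma orthogonal_annihilator_in_span:
  fixes u :: "nat \<Rightarrow> complex^'k::finite"
  assumes annihilator: "\<And>v. \<forall>i<p. cinner (u i) v = 0 \<Longrightarrow> cinner w v = 0"
  shows "w \<in> complex_span p u"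
proof -
  define S where "S = u ` {..<p} \<union> (\<lambda>z. \<i> *s z) ` u ` {..<p}"
  have "u j \<in> complex_span p u" "\<i> *s u j \<in> complex_span p u" if "j < p" for j
    using smult_mem_complex_span[OF that, of 1] smult_mem_complex_span[OF that, of \<i>] by auto
  then have "S \<subseteq> complex_span p u" unfolding S_def by auto
  then have span_S: "span S \<subseteq> complex_span p u" by (simp add: span_minimal subspace_complex_span)
  obtain y z where y: "y \<in> span S" and z: "\<And>v. v \<in> span S \<Longrightarrow> orthogonal z v"
    and w: "w = y + z"
    using orthogonal_subspace_decomp_exists by blast
  have "cinner (u i) z = 0" if i: "i < p" for i
  proof -
    have "u i \<in> span S" "\<i> *s u i \<in> span S" using i by (auto simp: S_def intro!: span_base)
    then have "inner z (u i) = 0" "inner z (\<i> *s u i) = 0" using z by (auto simp: orthogonal_def)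
    then have "cinner z (u i) = 0"
      by (auto simp: inner_eq_Re_cinner cinner_smult_right complex_eq_iff)
    then show ?thesis by (subst cinner_commute) simp
  qed
  then have "inner w z = 0" using annihilator by (simp add: inner_eq_Re_cinner)
  moreover have "inner y z = 0" using z[OF y] by (simp add: orthogonal_def inner_commute)
  ultimately have "inner z z = 0" unfolding w by (simp add: inner_add_left)
  then show ?thesis using y span_S w by auto
qed

lemma pure_product_state_rank_one_nonneg:
  assumes "pure_product_state s"
  shows "\<exists>r\<ge>0. s (rank_one v) = of_real r"
  using assms unfolding pure_product_state_def by (auto simp: vstate_rank_one simp del: of_real_power)

lemma pps_support_vanishes:
  assumes rep: "pps_representation \<omega> \<mu>" and support: "\<mu> s \<noteq> 0"
    and nonneg: "\<And>s'. pure_product_state s' \<Longrightarrow> \<exists>r\<ge>0. s' M = of_real r"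
    and zero: "\<omega> M = 0"
  shows "s M = 0"
proof -
  define T where "T = {s. \<mu> s \<noteq> 0}"
  from rep have finite: "finite T" and weights: "\<forall>s. \<mu> s \<ge> 0"
    and pure: "\<forall>s\<in>T. pure_product_state s"
    and expansion: "\<omega> M = (\<Sum>s\<in>T. of_real (\<mu> s) * s M)"
    unfolding pps_representation_def T_def by auto
  define r where "r s' = Re (s' M)" for s'
  have real: "s' M = of_real (r s') \<and> r s' \<ge> 0" if s'T: "s' \<in> T" for s'
  proof -
    obtain q where "q \<ge> 0" "s' M = of_real q" using nonneg pure s'T by blast
    then show ?thesis by (simp add: r_def)
  qed
  have "of_real (\<Sum>s'\<in>T. \<mu> s' * r s') = \<omega> M"
    unfolding expansion of_real_sum using real by (intro sum.cong) simp_all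
  then have sum_zero: "(\<Sum>s'\<in>T. \<mu> s' * r s') = 0" using zero of_real_eq_0_iff by metis
  have "\<And>s'. s' \<in> T \<Longrightarrow> 0 \<le> \<mu> s' * r s'" using real weights by simp
  then have "\<forall>s'\<in>T. \<mu> s' * r s' = 0" using sum_zero by (simp only: sum_nonneg_eq_0_iff[OF finite])
  then have "\<mu> s * r s = 0" using support by (simp add: T_def)
  then show ?thesis using support real[of s] unfolding T_def by simp
qed

lemma pps_support_in_family:
  assumes unit_e: "\<forall>i<p. norm (e i) = 1" and unit_f: "\<forall>i<p. norm (f i) = 1"
    and lines: "\<forall>i<p. \<forall>j<p. i \<noteq> j \<longrightarrow> line (e i) \<noteq> line (e j)"
    and indep: "lin_indep_family p f"
    and rep: "pps_representation (\<lambda>A. \<Sum>i<p. complex_of_real (lam i) * vstate (tensor (e i) (f i)) A) \<mu>"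
    and support: "\<mu> s \<noteq> 0"
  shows "\<exists>k<p. s = vstate (tensor (e k) (f k))"
proof -
  define u where "u i = tensor (e i) (f i)" for i
  obtain x y where "norm x = 1" "norm y = 1" and s: "s = vstate (tensor x y)"
    using rep support unfolding pps_representation_def pure_product_state_def by auto
  then have unit_w: "norm (tensor x y) = 1" by (simp add: norm_tensor)
  have "cinner (tensor x y) v = 0" if "\<forall>i<p. cinner (u i) v = 0" for v
  proof -
    have "(\<Sum>i<p. complex_of_real (lam i) * vstate (tensor (e i) (f i)) (rank_one v)) = 0"
      using that by (simp add: u_def vstate_rank_one)
    moreover have "\<exists>r\<ge>0. s' (rank_one v) = of_real r" if "pure_product_state s'" for s'
      using that by (rule pure_product_state_rank_one_nonneg)
    ultimately have "s (rank_one v) = 0"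
      using pps_support_vanishes[OF rep support, where M = "rank_one v"] by blast
    then show ?thesis by (simp add: s vstate_rank_one)
  qed
  then obtain c where expansion: "tensor x y = (\<Sum>i<p. c i *s tensor (e i) (f i))"
    using orthogonal_annihilator_in_span[of p u "tensor x y"] unfolding complex_span_def u_def by blast
  have "\<forall>i<p. e i \<noteq> 0" using unit_e by auto
  moreover have "tensor x y \<noteq> 0" using unit_w by auto
  ultimately obtain k where k: "k < p" and w: "tensor x y = c k *s u k"
    using product_vector_in_span[OF indep _ lines expansion] unfolding u_def by blast
  have "norm (u k) = 1" using k unit_e unit_f by (simp add: u_def norm_tensor)
  then have "cmod (c k) = 1" using unit_w w by (simp add: norm_smult_complex)
  then have "s = vstate (u k)" by (simp add: s w fun_eq_iff vstate_smult)
  then show ?thesis using k by (auto simp: u_def)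
qed

definition mixture_weights :: "nat \<Rightarrow> (nat \<Rightarrow> real) \<Rightarrow> (nat \<Rightarrow> 'a) \<Rightarrow> 'a \<Rightarrow> real" where
  "mixture_weights p lam st s = (\<Sum>k\<in>{k. k < p \<and> st k = s}. lam k)"

lemma mixture_weights_outside: "s \<notin> st ` {..<p} \<Longrightarrow> mixture_weights p lam st s = 0"
  unfolding mixture_weights_def by (auto intro!: sum.neutral)

lemma mixture_weights_representation:
  assumes pure: "\<forall>k<p. pure_product_state (st k)"
    and nonneg: "\<forall>k<p. lam k \<ge> 0" and total: "(\<Sum>k<p. lam k) = 1"
  shows "pps_representation (\<lambda>A. \<Sum>k<p. of_real (lam k) * st k A) (mixture_weights p lam st)"
proof -
  let ?\<nu> = "mixture_weights p lam st"
  have supp: "{s. ?\<nu> s \<noteq> 0} \<subseteq> st ` {..<p}"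
  proof
    fix s assume "s \<in> {s. ?\<nu> s \<noteq> 0}"
    then show "s \<in> st ` {..<p}" using mixture_weights_outside[of s st p lam] by blast
  qed
  have restrict: "(\<Sum>s\<in>st ` {..<p}. g (?\<nu> s) s) = (\<Sum>s\<in>{s. ?\<nu> s \<noteq> 0}. g (?\<nu> s) s)"
    if "\<And>s. g 0 s = 0" for g :: "real \<Rightarrow> _ \<Rightarrow> 'z::comm_monoid_add"
    using supp that by (intro sum.mono_neutral_right) auto
  have regroup: "(\<Sum>k<p. h k) = (\<Sum>s\<in>st ` {..<p}. \<Sum>k\<in>{k. k < p \<and> st k = s}. h k)"
    for h :: "nat \<Rightarrow> 'z::comm_monoid_add"
    using sum.image_gen[of "{..<p}" h st] by simp
  show ?thesis
    unfolding pps_representation_def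
  proof (intro conjI allI impI)
    show "finite {s. ?\<nu> s \<noteq> 0}" using supp by (rule finite_subset) simp
  next
    fix s show "?\<nu> s \<ge> 0" unfolding mixture_weights_def using nonneg by (auto intro!: sum_nonneg)
  next
    fix s assume "?\<nu> s \<noteq> 0"
    then have "s \<in> st ` {..<p}" using supp by blast
    then show "pure_product_state s" using pure by auto
  next
    have "(\<Sum>s\<in>{s. ?\<nu> s \<noteq> 0}. ?\<nu> s) = (\<Sum>s\<in>st ` {..<p}. ?\<nu> s)"
      using restrict[of "\<lambda>r s. r"] by simp
    also have "\<dots> = (\<Sum>k<p. lam k)"
      unfolding mixture_weights_def by (rule regroup[symmetric])
    finally show "(\<Sum>s\<in>{s. ?\<nu> s \<noteq> 0}. ?\<nu> s) = 1" using total by simp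
  next
    fix A
    have "(\<Sum>k<p. of_real (lam k) * st k A)
        = (\<Sum>s\<in>st ` {..<p}. \<Sum>k\<in>{k. k < p \<and> st k = s}. of_real (lam k) * st k A)"
      by (rule regroup)
    also have "\<dots> = (\<Sum>s\<in>st ` {..<p}. of_real (?\<nu> s) * s A)"
      unfolding mixture_weights_def of_real_sum sum_distrib_right by (intro sum.cong) auto
    also have "\<dots> = (\<Sum>s\<in>{s. ?\<nu> s \<noteq> 0}. of_real (?\<nu> s) * s A)"
      using restrict[of "\<lambda>r s. of_real r * s A"] by simp
    finally show "(\<Sum>k<p. of_real (lam k) * st k A) = (\<Sum>s\<in>{s. ?\<nu> s \<noteq> 0}. of_real (?\<nu> s) * s A)" .
  qed
qed

lemma lin_indep_functionals_inj:
  fixes st :: "nat \<Rightarrow> 'a \<Rightarrow> 'b::comm_ring_1"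
  assumes indep: "\<And>d k. \<forall>A. (\<Sum>i<p. d i * st i A) = 0 \<Longrightarrow> k < p \<Longrightarrow> d k = 0"
  shows "inj_on st {..<p}"
proof (rule inj_onI, rule ccontr)
  fix k l assume k: "k \<in> {..<p}" and l: "l \<in> {..<p}" and eq: "st k = st l" and kl: "k \<noteq> l"
  define d where "d i = (if i = k then 1 else 0) - (if i = l then 1 else 0 :: 'b)" for i
  have "(\<Sum>i<p. d i * st i A)
      = (\<Sum>i<p. if i = k then st i A else 0) - (\<Sum>i<p. if i = l then st i A else 0)" for A
    unfolding d_def sum_subtractf[symmetric] by (intro sum.cong) auto
  then have "\<forall>A. (\<Sum>i<p. d i * st i A) = 0" using k l eq by simp
  then have "d k = 0" using indep k by blast
  then show False using kl by (simp add: d_def)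
qed

lemma pps_representation_unique:
  assumes indep: "\<And>d k. \<forall>A. (\<Sum>i<p. d i * st i A) = 0 \<Longrightarrow> k < p \<Longrightarrow> d k = 0"
    and rep: "pps_representation (\<lambda>A. \<Sum>k<p. of_real (lam k) * st k A) \<mu>"
    and support: "\<And>s. \<mu> s \<noteq> 0 \<Longrightarrow> s \<in> st ` {..<p}"
  shows "\<mu> = mixture_weights p lam st"
proof -
  have inj: "inj_on st {..<p}" using indep by (rule lin_indep_functionals_inj)
  have "(\<Sum>k<p. of_real (lam k) * st k A) = (\<Sum>k<p. of_real (\<mu> (st k)) * st k A)" for A
  proof -
    have "(\<Sum>k<p. of_real (lam k) * st k A) = (\<Sum>s\<in>{s. \<mu> s \<noteq> 0}. of_real (\<mu> s) * s A)"
      using rep unfolding pps_representation_def by blast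
    also have "\<dots> = (\<Sum>s\<in>st ` {..<p}. of_real (\<mu> s) * s A)"
      using support by (intro sum.mono_neutral_left) auto
    also have "\<dots> = (\<Sum>k<p. of_real (\<mu> (st k)) * st k A)"
      using inj by (simp add: sum.reindex)
    finally show ?thesis .
  qed
  then have "\<forall>A. (\<Sum>k<p. (of_real (\<mu> (st k)) - of_real (lam k)) * st k A) = 0"
    by (simp add: left_diff_distrib sum_subtractf)
  then have weights: "\<mu> (st k) = lam k" if "k < p" for k
    using indep[of "\<lambda>k. of_real (\<mu> (st k)) - of_real (lam k)"] that by simp
  show ?thesis
  proof
    fix s
    show "\<mu> s = mixture_weights p lam st s"
    proof (cases "s \<in> st ` {..<p}")
      case True
      then obtain k where k: "k < p" "s = st k" by blast
      then have "{j. j < p \<and> st j = s} = {k}" using inj by (auto dest: inj_onD)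
      then show ?thesis using weights k by (simp add: mixture_weights_def)
    next
      case False
      then show ?thesis using support[of s] mixture_weights_outside[of s st p lam] by auto
    qed
  qed
qed

theorem mainTheorem5:
  fixes p :: nat
    and e :: "nat \<Rightarrow> complex^'m::finite"
    and f :: "nat \<Rightarrow> complex^'n::finite"
    and lam :: "nat \<Rightarrow> real"
  assumes "\<forall>i<p. norm (e i) = 1"
    and "\<forall>i<p. norm (f i) = 1"
    and "\<forall>i<p. \<forall>j<p. i \<noteq> j \<longrightarrow> line (e i) \<noteq> line (e j)"
    and "lin_indep_family p f"
    and "\<forall>i<p. lam i \<ge> 0"
    and "(\<Sum>i<p. lam i) = 1"
  shows "\<exists>!\<mu>. pps_representation
                 (\<lambda>A. \<Sum>i<p. complex_of_real (lam i) * vstate (tensor (e i) (f i)) A) \<mu>"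
proof -
  define st where "st i = vstate (tensor (e i) (f i))" for i
  define \<omega> where "\<omega> = (\<lambda>A. \<Sum>i<p. complex_of_real (lam i) * st i A)"
  have "\<forall>i<p. norm (tensor (e i) (f i)) = 1" using assms(1,2) by (simp add: norm_tensor)
  then have nonzero: "\<forall>i<p. tensor (e i) (f i) \<noteq> 0" by auto
  have indep: "lin_indep_family p (\<lambda>i. tensor (e i) (f i))"
    using assms(1) by (intro lin_indep_tensor[OF assms(4)]) auto
  have states_indep: "\<And>d k. \<forall>A. (\<Sum>i<p. d i * st i A) = 0 \<Longrightarrow> k < p \<Longrightarrow> d k = 0"
    unfolding st_def by (rule vstates_lin_indep[OF indep nonzero])
  have pure: "\<forall>i<p. pure_product_state (st i)"
    using assms(1,2) unfolding st_def pure_product_state_def by blast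
  have support: "s \<in> st ` {..<p}" if "pps_representation \<omega> \<mu>" "\<mu> s \<noteq> 0" for \<mu> s
    using pps_support_in_family[OF assms(1-4)] that unfolding \<omega>_def st_def by blast
  have "\<exists>!\<mu>. pps_representation \<omega> \<mu>"
  proof (rule ex1I)
    show "pps_representation \<omega> (mixture_weights p lam st)"
      unfolding \<omega>_def by (rule mixture_weights_representation[OF pure assms(5,6)])
  next
    fix \<mu> assume rep: "pps_representation \<omega> \<mu>"
    show "\<mu> = mixture_weights p lam st"
      using states_indep rep[unfolded \<omega>_def] support[OF rep] by (rule pps_representation_unique)
  qed
  then show ?thesis unfolding \<omega>_def st_def .
qed

end
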